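(* Let $(V,E)$ be a finite graph and $p\in(0,1)$. Assume that there exists a vertex $\bar x\in V$ which belongs to at least four edges, and that there exists a spin configuration $\bar\sigma\in\{-1,1\}^V$ with $\delta_{\bar\sigma}(e)=0$ for every $e\in E$. Let $(\eta_t,\sigma_t)_{t\ge0}$ be a continuous-time Markov jump process on $\{0,1\}^E\times\{-1,1\}^V$ with rates $q$ satisfying $q((\eta,\sigma),(\eta',\sigma'))\ge0$ for $(\eta,\sigma)\ne(\eta',\sigma')$, $\sum_{(\eta',\sigma')}q((\eta,\sigma),(\eta',\sigma'))=0$ for all $(\eta,\sigma)$, and the detailed balance equation $IP(\eta,\sigma)q((\eta,\sigma),(\eta',\sigma'))=IP(\eta',\sigma')q((\eta',\sigma'),(\eta,\sigma))$ for all pairs of states. If the spin marginal $(\sigma_t)_{t\ge0}$ is a Markov jump process with transition rates $c(\sigma,\sigma')$ satisfying $c(\sigma,\sigma')=0$ whenever $\sigma,\sigma'$ differ at two or more vertices, $c(\sigma,\sigma^x)>0$ for all $x\in V$, and $c(\sigma,\sigma)=-\sum_{y\in V}c(\sigma,\sigma^y)$, then the edge marginal $(\eta_t)_{t\ge0}$ is not a Markov jump process.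
   Context: $(V,E)$ is a finite graph with unoriented edges, $E$ a set of pairs of distinct vertices. Edge configurations $\eta\in\{0,1\}^E$, spin configurations $\sigma\in\{-1,1\}^V$. For $e=\langle x,y\rangle$, $\delta_\sigma(e)=\mathbf 1_{\sigma(x)=\sigma(y)}$. $IP(\eta,\sigma)=\frac1Z\prod_{e\in E}\big(p\mathbf 1_{\eta(e)=1}\delta_\sigma(e)+(1-p)\mathbf 1_{\eta(e)=0}\big)$ with $Z$ the normalizing constant. $\sigma^x$ is $\sigma$ with the spin at $x$ flipped. A marginal process is a Markov jump process if it is a time-homogeneous Markov process for every initial distribution, with transition rates not depending on the initial distribution. *)

theory Defs
  imports Complex_Main
begin

definition qmatrix :: "'s set \<Rightarrow> ('s \<Rightarrow> 's \<Rightarrow> real) \<Rightarrow> bool" where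
  "qmatrix S Q \<longleftrightarrow> (\<forall>x\<in>S. \<forall>y\<in>S. x \<noteq> y \<longrightarrow> Q x y \<ge> 0) \<and> (\<forall>x\<in>S. (\<Sum>y\<in>S. Q x y) = 0)"

fun mpow :: "'s set \<Rightarrow> ('s \<Rightarrow> 's \<Rightarrow> real) \<Rightarrow> nat \<Rightarrow> 's \<Rightarrow> 's \<Rightarrow> real" where
  "mpow S Q 0 x y = (if x = y then 1 else 0)"
| "mpow S Q (Suc n) x y = (\<Sum>z\<in>S. mpow S Q n x z * Q z y)"

definition trans_fun :: "'s set \<Rightarrow> ('s \<Rightarrow> 's \<Rightarrow> real) \<Rightarrow> real \<Rightarrow> 's \<Rightarrow> 's \<Rightarrow> real" where
  "trans_fun S Q t x y = (\<Sum>n. t ^ n / fact n * mpow S Q n x y)"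

definition distr_on :: "'s set \<Rightarrow> ('s \<Rightarrow> real) \<Rightarrow> bool" where
  "distr_on S \<mu> \<longleftrightarrow> (\<forall>x\<in>S. \<mu> x \<ge> 0) \<and> (\<Sum>x\<in>S. \<mu> x) = 1"

text \<open>Given the underlying process is at state x, probability that the observed process
  (through f) takes values y_1,...,y_n after successive time increments d_1,...,d_n.\<close>
fun obs_path :: "'s set \<Rightarrow> ('s \<Rightarrow> 's \<Rightarrow> real) \<Rightarrow> ('s \<Rightarrow> 'a) \<Rightarrow> 's \<Rightarrow> (real \<times> 'a) list \<Rightarrow> real" where
  "obs_path S Q f x [] = 1"
| "obs_path S Q f x ((d, y) # rest) =
     (\<Sum>x'\<in>S. if f x' = y then trans_fun S Q d x x' * obs_path S Q f x' rest else 0)"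

text \<open>Finite-dimensional distribution of the marginal f(X_t) of the jump process X with rates Q
  and initial law mu: probability of f(X_0)=y0, f(X_{t_1})=y_1, ..., where t_k - t_{k-1} = d_k.\<close>
definition marginal_fdd :: "'s set \<Rightarrow> ('s \<Rightarrow> 's \<Rightarrow> real) \<Rightarrow> ('s \<Rightarrow> 'a) \<Rightarrow> ('s \<Rightarrow> real)
    \<Rightarrow> 'a \<Rightarrow> (real \<times> 'a) list \<Rightarrow> real" where
  "marginal_fdd S Q f \<mu> y0 steps = (\<Sum>x\<in>S. if f x = y0 then \<mu> x * obs_path S Q f x steps else 0)"

text \<open>The marginal f(X_t) is a Markov jump process on T with transition rates c: for every
  initial distribution, its finite-dimensional distributions are those of the time-homogeneous
  Markov jump process on T with rate matrix c (c not depending on the initial distribution).\<close>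
definition markov_jump_marginal :: "'s set \<Rightarrow> ('s \<Rightarrow> 's \<Rightarrow> real) \<Rightarrow> ('s \<Rightarrow> 'a) \<Rightarrow> 'a set
    \<Rightarrow> ('a \<Rightarrow> 'a \<Rightarrow> real) \<Rightarrow> bool" where
  "markov_jump_marginal S Q f T c \<longleftrightarrow> qmatrix T c \<and>
     (\<forall>\<mu>. distr_on S \<mu> \<longrightarrow> (\<forall>y0\<in>T. \<forall>steps. (\<forall>(d, y)\<in>set steps. d \<ge> 0 \<and> y \<in> T) \<longrightarrow>
        marginal_fdd S Q f \<mu> y0 steps =
          (\<Sum>x\<in>S. if f x = y0 then \<mu> x else 0) * obs_path T c id y0 steps))"

text \<open>Spins are encoded by bool (True = +1, False = -1); edges are 2-element vertex sets.
  Vertex set V = UNIV of a finite type.\<close>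

definition delta :: "('v \<Rightarrow> bool) \<Rightarrow> 'v set \<Rightarrow> bool" where
  "delta \<sigma> e \<longleftrightarrow> (\<forall>x\<in>e. \<forall>y\<in>e. \<sigma> x = \<sigma> y)"

definition edge_configs :: "'v set set \<Rightarrow> ('v set \<Rightarrow> bool) set" where
  "edge_configs E = {\<eta>. \<forall>e. \<eta> e \<longrightarrow> e \<in> E}"

definition ES_weight :: "'v set set \<Rightarrow> real \<Rightarrow> ('v set \<Rightarrow> bool) \<Rightarrow> ('v \<Rightarrow> bool) \<Rightarrow> real" where
  "ES_weight E p \<eta> \<sigma> =
     (\<Prod>e\<in>E. (if \<eta> e \<and> delta \<sigma> e then p else 0) + (if \<not> \<eta> e then 1 - p else 0))"

definition ES_Z :: "'v set set \<Rightarrow> real \<Rightarrow> real" where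
  "ES_Z E p = (\<Sum>\<eta>\<in>edge_configs E. \<Sum>\<sigma>\<in>(UNIV :: ('v \<Rightarrow> bool) set). ES_weight E p \<eta> \<sigma>)"

definition IP :: "'v set set \<Rightarrow> real \<Rightarrow> ('v set \<Rightarrow> bool) \<Rightarrow> ('v \<Rightarrow> bool) \<Rightarrow> real" where
  "IP E p \<eta> \<sigma> = ES_weight E p \<eta> \<sigma> / ES_Z E p"

definition flip :: "('v \<Rightarrow> bool) \<Rightarrow> 'v \<Rightarrow> ('v \<Rightarrow> bool)" where
  "flip \<sigma> x = \<sigma>(x := \<not> \<sigma> x)"

end

theory Submission
  imports Defs
begin

(* If the bond marginal were a Markov jump process with rates r, lumpability would make r \<emptyset> \<eta>
  equal to the total rate from (\<emptyset>, \<sigma>) into the fibre {\<eta>} \<times> spins, for every spin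
  configuration \<sigma>. Let \<eta> be a star of three bonds at xbar. From the spin configuration that is
  +1 exactly at two of the three neighbours, every configuration compatible with the star differs in
  at least two spins, and detailed balance forbids jumps into states of IP-probability zero, so this
  total rate is 0. From the antiferromagnetic sigmabar it is positive: the spin marginal flips xbar
  in (star, flip sigmabar xbar) at positive rate, the only bond configuration compatible with
  sigmabar is \<emptyset>, so (star, flip sigmabar xbar) jumps to (\<emptyset>, sigmabar), and by detailed
  balance also back. *)

lemma mpow_abs_le:
  assumes "finite S" "y \<in> S"
  shows "\<bar>mpow S Q n x y\<bar> \<le> (\<Sum>z\<in>S. \<Sum>w\<in>S. \<bar>Q z w\<bar>) ^ n"
  using assms(2)
proof (induction n arbitrary: y)
  case 0
  then show ?case by simp
next
  case (Suc n)
  define M where "M = (\<Sum>z\<in>S. \<Sum>w\<in>S. \<bar>Q z w\<bar>)"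
  have "\<bar>mpow S Q (Suc n) x y\<bar> \<le> (\<Sum>z\<in>S. \<bar>mpow S Q n x z\<bar> * \<bar>Q z y\<bar>)"
    unfolding mpow.simps abs_mult[symmetric] by (rule sum_abs)
  also have "\<dots> \<le> (\<Sum>z\<in>S. M ^ n * \<bar>Q z y\<bar>)"
    using Suc.IH by (intro sum_mono mult_right_mono) (auto simp: M_def)
  also have "\<dots> = M ^ n * (\<Sum>z\<in>S. \<bar>Q z y\<bar>)"
    by (simp add: sum_distrib_left)
  also have "\<dots> \<le> M ^ n * M"
    unfolding M_def using assms(1) Suc.prems
    by (intro mult_left_mono sum_mono member_le_sum zero_le_power sum_nonneg) auto
  finally show ?case
    by (simp add: M_def mult.commute)
qed

lemma trans_fun_has_field_derivative_0:
  assumes "finite S" "x \<in> S" "y \<in> S"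
  shows "((\<lambda>t. trans_fun S Q t x y) has_field_derivative Q x y) (at 0)"
proof -
  define a where "a n = mpow S Q n x y / fact n" for n
  define M where "M = (\<Sum>z\<in>S. \<Sum>w\<in>S. \<bar>Q z w\<bar>)"
  have trans_fun_powser: "(\<lambda>t. trans_fun S Q t x y) = (\<lambda>t. \<Sum>n. a n * t ^ n)"
    unfolding trans_fun_def a_def by (simp add: field_simps)
  have "summable (\<lambda>n. a n * 1 ^ n)"
  proof (rule summable_comparison_test'[OF summable_exp[of M]])
    show "norm (a n * 1 ^ n) \<le> inverse (fact n) * M ^ n" for n
      using mpow_abs_le[OF assms(1,3), of Q n x] unfolding a_def M_def
      by (simp add: field_simps)
  qed
  then have "((\<lambda>t. \<Sum>n. a n * t ^ n) has_field_derivative (\<Sum>n. diffs a n * 0 ^ n)) (at 0)"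
    by (rule termdiffs_strong) simp
  moreover have "(\<Sum>n. diffs a n * 0 ^ n) = a 1"
    by (simp add: diffs_def)
  moreover have "a 1 = Q x y"
    using assms by (simp add: a_def if_distrib[of "\<lambda>u. u * _"] cong: if_cong)
  ultimately show ?thesis
    by (simp add: trans_fun_powser)
qed

lemma has_field_derivative_unique_right:
  fixes g h :: "real \<Rightarrow> real"
  assumes "(g has_field_derivative a) (at x)" "(h has_field_derivative b) (at x)"
    and "\<And>t. x \<le> t \<Longrightarrow> g t = h t"
  shows "a = b"
proof (rule has_field_derivative_unique)
  show "(g has_field_derivative a) (at x within {x<..})"
    using assms(1) by (rule has_field_derivative_at_within)
  have "(h has_field_derivative b) (at x within {x<..})"
    using assms(2) by (rule has_field_derivative_at_within)
  moreover have "eventually (\<lambda>t. g t = h t) (at x within {x<..})"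
    using assms(3) by (auto simp: eventually_at_filter)
  ultimately show "(g has_field_derivative b) (at x within {x<..})"
    using assms(3) by (subst has_field_derivative_cong_eventually) auto
  show "at x within {x<..} \<noteq> bot"
    by simp
qed

lemma markov_jump_marginal_trans_fun:
  assumes "markov_jump_marginal S Q f T C" "finite S" "finite T"
    and "s \<in> S" "f s \<in> T" "y \<in> T" "0 \<le> t"
  shows "(\<Sum>x\<in>{x\<in>S. f x = y}. trans_fun S Q t s x) = trans_fun T C t (f s) y"
proof -
  define \<mu> where "\<mu> x = (if x = s then 1 else 0 :: real)" for x
  have \<mu>: "distr_on S \<mu>"
    using assms(2,4) by (simp add: distr_on_def \<mu>_def)
  then have "marginal_fdd S Q f \<mu> (f s) [(t, y)] =
      (\<Sum>x\<in>S. if f x = f s then \<mu> x else 0) * obs_path T C id (f s) [(t, y)]"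
    using assms(1,5-7) unfolding markov_jump_marginal_def by auto
  moreover have "marginal_fdd S Q f \<mu> (f s) [(t, y)] =
      (\<Sum>x\<in>S. if x = s then obs_path S Q f s [(t, y)] else 0)"
    unfolding marginal_fdd_def \<mu>_def by (rule sum.cong) auto
  moreover have "(\<Sum>x\<in>S. if f x = f s then \<mu> x else 0) = (\<Sum>x\<in>S. \<mu> x)"
    by (rule sum.cong) (auto simp: \<mu>_def)
  ultimately show ?thesis
    using \<mu> assms(2-4,6) unfolding distr_on_def by (simp add: sum.inter_filter cong: if_cong)
qed

lemma markov_jump_marginal_rates:
  assumes "markov_jump_marginal S Q f T C" "finite S" "finite T"
    and "s \<in> S" "f s \<in> T" "y \<in> T"
  shows "(\<Sum>x\<in>{x\<in>S. f x = y}. Q s x) = C (f s) y"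
proof (rule has_field_derivative_unique_right)
  show "((\<lambda>t. \<Sum>x\<in>{x\<in>S. f x = y}. trans_fun S Q t s x) has_field_derivative
      (\<Sum>x\<in>{x\<in>S. f x = y}. Q s x)) (at 0)"
    using assms(2,4) by (intro DERIV_sum trans_fun_has_field_derivative_0) auto
  show "((\<lambda>t. trans_fun T C t (f s) y) has_field_derivative C (f s) y) (at 0)"
    using assms(3,5,6) by (rule trans_fun_has_field_derivative_0)
qed (use markov_jump_marginal_trans_fun[OF assms] in blast)

lemma markov_jump_marginal_fst_rates:
  assumes "markov_jump_marginal (A \<times> B) Q fst A R" "finite A" "finite B"
    and "a \<in> A" "b \<in> B" "a' \<in> A"
  shows "(\<Sum>b'\<in>B. Q (a, b) (a', b')) = R a a'"
proof -
  have "{x \<in> A \<times> B. fst x = a'} = Pair a' ` B"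
    using assms(6) by auto
  then show ?thesis
    using markov_jump_marginal_rates[OF assms(1), of "(a, b)" a'] assms(2-6)
    by (simp add: sum.reindex inj_on_def)
qed

lemma markov_jump_marginal_snd_rates:
  assumes "markov_jump_marginal (A \<times> B) Q snd B R" "finite A" "finite B"
    and "a \<in> A" "b \<in> B" "b' \<in> B"
  shows "(\<Sum>a'\<in>A. Q (a, b) (a', b')) = R b b'"
proof -
  have "{x \<in> A \<times> B. snd x = b'} = (\<lambda>a'. (a', b')) ` A"
    using assms(6) by auto
  then show ?thesis
    using markov_jump_marginal_rates[OF assms(1), of "(a, b)" b'] assms(2-6)
    by (simp add: sum.reindex inj_on_def)
qed

definition ES_compatible :: "'v set set \<Rightarrow> ('v set \<Rightarrow> bool) \<Rightarrow> ('v \<Rightarrow> bool) \<Rightarrow> bool" where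
  "ES_compatible E \<eta> \<sigma> \<longleftrightarrow> (\<forall>e\<in>E. \<eta> e \<longrightarrow> delta \<sigma> e)"

lemma ES_compatible_empty [simp]: "ES_compatible E (\<lambda>_. False) \<sigma>"
  by (simp add: ES_compatible_def)

lemma delta_doubleton: "delta \<sigma> {a, b} \<longleftrightarrow> \<sigma> a = \<sigma> b"
  by (auto simp: delta_def)

lemma empty_in_edge_configs [simp]: "(\<lambda>_. False) \<in> edge_configs E"
  by (simp add: edge_configs_def)

lemma ES_weight_nonneg: "0 < p \<Longrightarrow> p < 1 \<Longrightarrow> 0 \<le> ES_weight E p \<eta> \<sigma>"
  unfolding ES_weight_def by (intro prod_nonneg) auto

lemma ES_weight_pos: "0 < p \<Longrightarrow> p < 1 \<Longrightarrow> ES_compatible E \<eta> \<sigma> \<Longrightarrow> 0 < ES_weight E p \<eta> \<sigma>"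
  unfolding ES_weight_def ES_compatible_def by (intro prod_pos) auto

lemma ES_weight_eq_0: "finite E \<Longrightarrow> \<not> ES_compatible E \<eta> \<sigma> \<Longrightarrow> ES_weight E p \<eta> \<sigma> = 0"
  unfolding ES_weight_def ES_compatible_def by (rule prod_zero) auto

lemma ES_Z_pos:
  fixes E :: "('v::finite) set set"
  assumes "0 < p" "p < 1"
  shows "0 < ES_Z E p"
proof -
  have "0 < ES_weight E p (\<lambda>_. False) (\<lambda>_::'v. True)"
    using assms by (simp add: ES_weight_pos)
  also have "\<dots> \<le> (\<Sum>\<sigma>\<in>UNIV. ES_weight E p (\<lambda>_. False) \<sigma>)"
    using assms by (intro member_le_sum ES_weight_nonneg) auto
  also have "\<dots> \<le> ES_Z E p"
    unfolding ES_Z_def using assms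
    by (intro member_le_sum[of "\<lambda>_. False"] sum_nonneg ES_weight_nonneg) auto
  finally show ?thesis .
qed

lemma IP_pos:
  fixes E :: "('v::finite) set set"
  shows "0 < p \<Longrightarrow> p < 1 \<Longrightarrow> ES_compatible E \<eta> \<sigma> \<Longrightarrow> 0 < IP E p \<eta> \<sigma>"
  by (simp add: IP_def ES_weight_pos ES_Z_pos)

lemma IP_eq_0:
  fixes E :: "('v::finite) set set"
  shows "\<not> ES_compatible E \<eta> \<sigma> \<Longrightarrow> IP E p \<eta> \<sigma> = 0"
  by (simp add: IP_def ES_weight_eq_0)

lemma card_2_obtain_other:
  assumes "card e = 2" "x \<in> e"
  obtains y where "y \<noteq> x" "e = {x, y}"
  using assms unfolding card_2_iff by (metis insert_commute insertE singletonD)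

lemma three_neighbours:
  assumes "\<forall>e\<in>E. card e = 2" "3 \<le> card {e\<in>E. x \<in> e}"
  obtains y1 y2 y3 where "distinct [x, y1, y2, y3]" "{x, y1} \<in> E" "{x, y2} \<in> E" "{x, y3} \<in> E"
proof -
  obtain B where "B \<subseteq> {e\<in>E. x \<in> e}" "card B = 3"
    using assms(2) by (meson obtain_subset_with_card_n)
  then obtain e1 e2 e3 where e: "e1 \<in> E" "x \<in> e1" "e2 \<in> E" "x \<in> e2" "e3 \<in> E" "x \<in> e3"
    and "distinct [e1, e2, e3]"
    unfolding card_3_iff by auto
  obtain y1 y2 y3 where
    "y1 \<noteq> x" "e1 = {x, y1}" "y2 \<noteq> x" "e2 = {x, y2}" "y3 \<noteq> x" "e3 = {x, y3}"
    using card_2_obtain_other[of _ x] assms(1) e by metis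
  moreover have "y1 \<noteq> y2" "y1 \<noteq> y3" "y2 \<noteq> y3"
    using \<open>distinct [e1, e2, e3]\<close> calculation by force+
  ultimately show ?thesis
    using e by (intro that[of y1 y2 y3]) simp_all
qed

lemma two_le_card_disagree_with_constant:
  fixes \<sigma> :: "'v::finite \<Rightarrow> bool"
  assumes "distinct [x, y1, y2, y3]" "\<sigma> y1 = \<sigma> x" "\<sigma> y2 = \<sigma> x" "\<sigma> y3 = \<sigma> x"
  shows "2 \<le> card {v. (v = y1 \<or> v = y2) \<noteq> \<sigma> v}"
proof -
  obtain a b where "a \<noteq> b" "{a, b} \<subseteq> {v. (v = y1 \<or> v = y2) \<noteq> \<sigma> v}"
  proof (cases "\<sigma> x")
    case True
    with assms show ?thesis by (intro that[of x y3]) auto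
  next
    case False
    with assms show ?thesis by (intro that[of y1 y2]) auto
  qed
  then show ?thesis
    using card_mono[of "{v. (v = y1 \<or> v = y2) \<noteq> \<sigma> v}" "{a, b}"] by simp
qed

locale ES_spin_flip_dynamics =
  fixes E :: "('v::finite) set set"
    and p :: real
    and q :: "(('v set \<Rightarrow> bool) \<times> ('v \<Rightarrow> bool)) \<Rightarrow> (('v set \<Rightarrow> bool) \<times> ('v \<Rightarrow> bool)) \<Rightarrow> real"
    and c :: "('v \<Rightarrow> bool) \<Rightarrow> ('v \<Rightarrow> bool) \<Rightarrow> real"
  assumes edges: "\<forall>e\<in>E. card e = 2"
    and p: "0 < p" "p < 1"
    and q_nonneg: "\<And>\<eta> \<sigma> \<eta>' \<sigma>'. \<eta> \<in> edge_configs E \<Longrightarrow> \<eta>' \<in> edge_configs E \<Longrightarrow>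
        (\<eta>, \<sigma>) \<noteq> (\<eta>', \<sigma>') \<Longrightarrow> 0 \<le> q (\<eta>, \<sigma>) (\<eta>', \<sigma>')"
    and detailed_balance: "\<And>\<eta> \<sigma> \<eta>' \<sigma>'. \<eta> \<in> edge_configs E \<Longrightarrow> \<eta>' \<in> edge_configs E \<Longrightarrow>
        IP E p \<eta> \<sigma> * q (\<eta>, \<sigma>) (\<eta>', \<sigma>') = IP E p \<eta>' \<sigma>' * q (\<eta>', \<sigma>') (\<eta>, \<sigma>)"
    and spin_rates: "\<And>\<eta> \<sigma> \<sigma>'. \<eta> \<in> edge_configs E \<Longrightarrow>
        (\<Sum>\<eta>'\<in>edge_configs E. q (\<eta>, \<sigma>) (\<eta>', \<sigma>')) = c \<sigma> \<sigma>'"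
    and c_local: "\<And>\<sigma> \<sigma>'. 2 \<le> card {x. \<sigma> x \<noteq> \<sigma>' x} \<Longrightarrow> c \<sigma> \<sigma>' = 0"
    and c_pos: "\<And>\<sigma> x. 0 < c \<sigma> (flip \<sigma> x)"
begin

lemma rate_to_incompatible_eq_0:
  assumes "\<eta> \<in> edge_configs E" "\<eta>' \<in> edge_configs E"
    and "ES_compatible E \<eta> \<sigma>" "\<not> ES_compatible E \<eta>' \<sigma>'"
  shows "q (\<eta>, \<sigma>) (\<eta>', \<sigma>') = 0"
  using detailed_balance[OF assms(1,2), of \<sigma> \<sigma>'] IP_pos[OF p assms(3)] IP_eq_0[OF assms(4)]
  by simp

lemma rate_eq_0_if_two_spins_change:
  assumes "\<eta> \<in> edge_configs E" "\<eta>' \<in> edge_configs E" "2 \<le> card {x. \<sigma> x \<noteq> \<sigma>' x}"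
  shows "q (\<eta>, \<sigma>) (\<eta>', \<sigma>') = 0"
proof -
  have "\<sigma> \<noteq> \<sigma>'"
    using assms(3) by auto
  then have "\<forall>\<eta>''\<in>edge_configs E. 0 \<le> q (\<eta>, \<sigma>) (\<eta>'', \<sigma>')"
    using assms(1) q_nonneg by blast
  moreover have "(\<Sum>\<eta>''\<in>edge_configs E. q (\<eta>, \<sigma>) (\<eta>'', \<sigma>')) = 0"
    using spin_rates[OF assms(1)] c_local[OF assms(3)] by simp
  ultimately show ?thesis
    using assms(2) by (simp add: sum_nonneg_eq_0_iff)
qed

lemma rate_from_empty_pos:
  assumes "\<eta> \<in> edge_configs E" "ES_compatible E \<eta> \<sigma>"
    and antiferro: "\<forall>e\<in>E. \<not> delta \<sigma>' e" and "0 < c \<sigma> \<sigma>'"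
  shows "0 < q (\<lambda>_. False, \<sigma>') (\<eta>, \<sigma>)"
proof -
  have "q (\<eta>, \<sigma>) (\<eta>', \<sigma>') = 0"
    if \<eta>': "\<eta>' \<in> edge_configs E" "\<eta>' \<noteq> (\<lambda>_. False)" for \<eta>'
  proof (rule rate_to_incompatible_eq_0[OF assms(1) \<eta>'(1) assms(2)])
    obtain e where "\<eta>' e"
      using \<eta>'(2) by auto
    with \<eta>'(1) antiferro show "\<not> ES_compatible E \<eta>' \<sigma>'"
      by (auto simp: ES_compatible_def edge_configs_def)
  qed
  then have "c \<sigma> \<sigma>' = q (\<eta>, \<sigma>) (\<lambda>_. False, \<sigma>')"
    using spin_rates[OF assms(1), of \<sigma> \<sigma>'] by (simp add: sum.remove[of _ "\<lambda>_. False"])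
  then have "0 < IP E p \<eta> \<sigma> * q (\<eta>, \<sigma>) (\<lambda>_. False, \<sigma>')"
    using assms(4) IP_pos[OF p assms(2)] by simp
  then show ?thesis
    using detailed_balance[OF empty_in_edge_configs assms(1), of \<sigma>' \<sigma>]
      IP_pos[OF p ES_compatible_empty] by (metis zero_less_mult_pos)
qed

lemma edge_rate_from_empty_eq_0:
  assumes "\<eta> \<in> edge_configs E" "distinct [x, y1, y2, y3]"
    and "\<eta> {x, y1}" "\<eta> {x, y2}" "\<eta> {x, y3}"
  shows "(\<Sum>\<sigma>\<in>UNIV. q (\<lambda>_. False, \<lambda>v. v = y1 \<or> v = y2) (\<eta>, \<sigma>)) = 0"
proof (intro sum.neutral ballI)
  fix \<sigma>
  show "q (\<lambda>_. False, \<lambda>v. v = y1 \<or> v = y2) (\<eta>, \<sigma>) = 0"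
  proof (cases "ES_compatible E \<eta> \<sigma>")
    case True
    have "{x, y1} \<in> E" "{x, y2} \<in> E" "{x, y3} \<in> E"
      using assms(1,3-5) by (auto simp: edge_configs_def)
    with True assms(3-5) have "\<sigma> y1 = \<sigma> x" "\<sigma> y2 = \<sigma> x" "\<sigma> y3 = \<sigma> x"
      by (auto simp: ES_compatible_def delta_doubleton)
    with assms(2) show ?thesis
      by (intro rate_eq_0_if_two_spins_change empty_in_edge_configs assms(1)
          two_le_card_disagree_with_constant)
  next
    case False
    with assms(1) show ?thesis
      by (intro rate_to_incompatible_eq_0) auto
  qed
qed

lemma edge_rate_from_empty_pos:
  assumes "\<eta> \<in> edge_configs E" "\<eta> \<noteq> (\<lambda>_. False)" "\<forall>e. \<eta> e \<longrightarrow> x \<in> e"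
    and antiferro: "\<forall>e\<in>E. \<not> delta \<sigma>' e"
  shows "0 < (\<Sum>\<sigma>\<in>UNIV. q (\<lambda>_. False, \<sigma>') (\<eta>, \<sigma>))"
proof -
  have compatible: "ES_compatible E \<eta> (flip \<sigma>' x)"
    unfolding ES_compatible_def
  proof (intro ballI impI)
    fix e assume "e \<in> E" "\<eta> e"
    then obtain y where "y \<noteq> x" "e = {x, y}"
      using assms(3) edges by (metis card_2_obtain_other)
    with \<open>e \<in> E\<close> antiferro show "delta (flip \<sigma>' x) e"
      by (auto simp: delta_doubleton flip_def)
  qed
  have "0 < c (flip \<sigma>' x) \<sigma>'"
    using c_pos[of "flip \<sigma>' x" x] by (simp add: flip_def)
  with assms(1) compatible antiferro have "0 < q (\<lambda>_. False, \<sigma>') (\<eta>, flip \<sigma>' x)"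
    by (rule rate_from_empty_pos)
  also have "\<dots> \<le> (\<Sum>\<sigma>\<in>UNIV. q (\<lambda>_. False, \<sigma>') (\<eta>, \<sigma>))"
    using assms(1,2) q_nonneg by (intro member_le_sum) auto
  finally show ?thesis .
qed

end

theorem theorem4:
  fixes E :: "('v::finite) set set"
    and p :: real
    and q :: "(('v set \<Rightarrow> bool) \<times> ('v \<Rightarrow> bool)) \<Rightarrow> (('v set \<Rightarrow> bool) \<times> ('v \<Rightarrow> bool)) \<Rightarrow> real"
    and c :: "('v \<Rightarrow> bool) \<Rightarrow> ('v \<Rightarrow> bool) \<Rightarrow> real"
    and xbar :: 'v
    and sigmabar :: "'v \<Rightarrow> bool"
  defines "S \<equiv> edge_configs E \<times> (UNIV :: ('v \<Rightarrow> bool) set)"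
  assumes edges: "\<forall>e\<in>E. card e = 2"
    and p: "0 < p" "p < 1"
    and deg: "card {e\<in>E. xbar \<in> e} \<ge> 4"
    and antiferro: "\<forall>e\<in>E. \<not> delta sigmabar e"
    and q_nonneg: "\<forall>s\<in>S. \<forall>s'\<in>S. s \<noteq> s' \<longrightarrow> q s s' \<ge> 0"
    and q_rows: "\<forall>s\<in>S. (\<Sum>s'\<in>S. q s s') = 0"
    and detailed_balance: "\<forall>(\<eta>, \<sigma>)\<in>S. \<forall>(\<eta>', \<sigma>')\<in>S.
        IP E p \<eta> \<sigma> * q (\<eta>, \<sigma>) (\<eta>', \<sigma>') = IP E p \<eta>' \<sigma>' * q (\<eta>', \<sigma>') (\<eta>, \<sigma>)"
    and spin_markov: "markov_jump_marginal S q snd UNIV c"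
    and c_local: "\<forall>\<sigma> \<sigma>'. card {x. \<sigma> x \<noteq> \<sigma>' x} \<ge> 2 \<longrightarrow> c \<sigma> \<sigma>' = 0"
    and c_pos: "\<forall>\<sigma> x. c \<sigma> (flip \<sigma> x) > 0"
    and c_diag: "\<forall>\<sigma>. c \<sigma> \<sigma> = - (\<Sum>y\<in>UNIV. c \<sigma> (flip \<sigma> y))"
  shows "\<not> (\<exists>r. markov_jump_marginal S q fst (edge_configs E) r)"
proof
  assume "\<exists>r. markov_jump_marginal S q fst (edge_configs E) r"
  then obtain r where edge_markov: "markov_jump_marginal S q fst (edge_configs E) r" ..
  interpret ES_spin_flip_dynamics E p q c
  proof
    show "(\<Sum>\<eta>'\<in>edge_configs E. q (\<eta>, \<sigma>) (\<eta>', \<sigma>')) = c \<sigma> \<sigma>'" if "\<eta> \<in> edge_configs E" for \<eta> \<sigma> \<sigma>'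
      using markov_jump_marginal_snd_rates[OF spin_markov[unfolded S_def]] that by simp
  qed (use edges p q_nonneg detailed_balance c_local c_pos in \<open>auto simp: S_def\<close>)
  have edge_rates: "r (\<lambda>_. False) \<eta> = (\<Sum>\<sigma>\<in>UNIV. q (\<lambda>_. False, \<sigma>') (\<eta>, \<sigma>))"
    if "\<eta> \<in> edge_configs E" for \<eta> \<sigma>'
    using markov_jump_marginal_fst_rates[OF edge_markov[unfolded S_def]] that
    by (simp add: edge_configs_def)
  have "3 \<le> card {e\<in>E. xbar \<in> e}"
    using deg by simp
  then obtain y1 y2 y3 where
    y: "distinct [xbar, y1, y2, y3]" "{xbar, y1} \<in> E" "{xbar, y2} \<in> E" "{xbar, y3} \<in> E"
    by (rule three_neighbours[OF edges])
  define star where "star e \<longleftrightarrow> e = {xbar, y1} \<or> e = {xbar, y2} \<or> e = {xbar, y3}" for e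
  have star: "star \<in> edge_configs E" "star \<noteq> (\<lambda>_. False)" "\<forall>e. star e \<longrightarrow> xbar \<in> e"
    using y by (auto simp: star_def edge_configs_def fun_eq_iff)
  have "r (\<lambda>_. False) star = 0"
    using edge_rates[OF star(1)] edge_rate_from_empty_eq_0[OF star(1) y(1)] by (simp add: star_def)
  moreover have "0 < r (\<lambda>_. False) star"
    using edge_rates[OF star(1)] edge_rate_from_empty_pos[OF star antiferro] by simp
  ultimately show False
    by simp
qed

end
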